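(* There are absolute constants $c>0$ and $C$ such that for all $n$ the following holds. Let $A\subseteq\{0,1\}^n$ be random, each $x\in\{0,1\}^n$ included independently with probability $1/2$. Then with probability at least $1-2^{-2^{cn}}$ there exists an injective map $\phi_A\colon\{0,1\}^{n-1}\to\{0,1\}^n$ such that (1) for all $x\in\{0,1\}^{n-1}$, ${\sf dist}(x,\phi_A(x)_{[1,\dots,n-1]})\le 1$, and (2) $\Pr_{x\in\{0,1\}^{n-1}}[\phi_A(x)\in A]\ge 1-C/n$.
   Context: $z_{[1,\dots,n-1]}$ denotes the restriction of $z\in\{0,1\}^n$ to its first $n-1$ coordinates; ${\sf dist}$ is Hamming distance; $x$ is uniform in $\{0,1\}^{n-1}$. *)

theory Defs
  imports "HOL-Probability.Probability"
begin

definition cube :: "nat \<Rightarrow> bool list set" where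
  "cube n = {xs. length xs = n}"

text \<open>Hamming distance between two lists (intended for lists of equal length).\<close>
definition hamming :: "bool list \<Rightarrow> bool list \<Rightarrow> nat" where
  "hamming xs ys = card {i. i < length xs \<and> xs ! i \<noteq> ys ! i}"

end

theory Submission
  imports Defs
begin

text \<open>
  Split \<open>x \<in> {0,1}^(n-1)\<close> as a prefix \<open>v\<close> of length \<open>j\<close> followed by a suffix \<open>u\<close> of length
  \<open>K \<approx> n/2\<close>. In the block of \<open>v\<close>, call \<open>u\<close> a surplus if both lifts \<open>vu0, vu1\<close> lie in \<open>A\<close>
  and a deficit if neither does. Deficits are matched greedily, one coordinate at a time, to
  adjacent surpluses; a matched deficit is sent to the spare lift of its partner and every
  other point to a lift in \<open>A\<close> if it has one. This map is injective, changes the first \<open>n - 1\<close>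
  coordinates in at most one place, and misses \<open>A\<close> only at unmatched deficits.

  If \<open>p\<^sub>k\<close> is the probability that a vertex is still a deficit after matching along \<open>k\<close>
  coordinates, then \<open>p\<^sub>0 = 1/4\<close> and \<open>p\<^sub>k\<^sub>+\<^sub>1 = p\<^sub>k (1 - p\<^sub>k)\<close>: the two halves of the cube are
  independent, and by complementation of \<open>A\<close> remaining a surplus is as likely as remaining a
  deficit. Hence \<open>p\<^sub>K \<le> 1/(K + 4)\<close>. The \<open>2^j\<close> blocks are independent, so an exponential
  moment bound shows that the unmatched deficits exceed a \<open>3/(K + 4)\<close>-fraction of all points
  with probability at most \<open>2 powr (-2^j/(K + 4))\<close>, which is doubly exponentially small in \<open>n\<close>.
\<close>

section \<open>The Boolean cube\<close>

lemma cube_0: "cube 0 = {[]}"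
  by (auto simp: cube_def)

lemma cube_Suc: "cube (Suc n) = Cons True ` cube n \<union> Cons False ` cube n"
  unfolding cube_def by (auto simp: length_Suc_conv image_iff)

lemma finite_cube [simp]: "finite (cube n)"
  by (induction n) (auto simp: cube_Suc cube_0)

lemma card_cube: "card (cube n) = 2 ^ n"
proof (induction n)
  case 0
  then show ?case by (simp add: cube_0)
next
  case (Suc n)
  have "card (cube (Suc n)) = card (Cons True ` cube n) + card (Cons False ` cube n)"
    unfolding cube_Suc by (rule card_Un_disjoint) auto
  also have "\<dots> = 2 * 2 ^ n" using Suc by (simp add: card_image)
  finally show ?case by simp
qed

lemma cube_not_empty [simp]: "cube n \<noteq> {}"
  using card_cube[of n] by auto

lemma card_Pow_cube: "card (Pow (cube n)) = 2 ^ 2 ^ n"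
  by (simp add: card_Pow card_cube)

lemma card_cube_add:
  "card {x \<in> cube (j + k). P (take j x) (drop j x)} = (\<Sum>v\<in>cube j. card {u \<in> cube k. P v u})"
proof -
  have "{x \<in> cube (j + k). P (take j x) (drop j x)} =
        (\<lambda>(v, u). v @ u) ` (SIGMA v:cube j. {u \<in> cube k. P v u})"
    by (auto simp: cube_def image_iff)
       (metis add_diff_cancel_left' append_take_drop_id le_add1 length_drop length_take min.absorb2)
  moreover have "inj_on (\<lambda>(v, u). v @ u) (SIGMA v:cube j. {u \<in> cube k. P v u})"
    by (auto simp: inj_on_def cube_def)
  ultimately show ?thesis
    by (simp add: card_image card_SigmaI)
qed

definition slice :: "bool \<Rightarrow> bool list set \<Rightarrow> bool list set" where
  "slice b A = {w. b # w \<in> A}"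

definition fiber :: "bool list \<Rightarrow> bool list set \<Rightarrow> bool list set" where
  "fiber v A = {w. v @ w \<in> A}"

lemma fiber_Nil: "fiber [] A = A"
  by (simp add: fiber_def)

lemma fiber_Cons: "fiber (b # v) A = fiber v (slice b A)"
  by (simp add: fiber_def slice_def)

lemma slice_complement: "slice b (cube (Suc n) - A) = cube n - slice b A"
  by (auto simp: slice_def cube_def)

text \<open>
  Splitting a set along the first coordinate identifies \<open>Pow (cube (Suc n))\<close> with
  \<open>Pow (cube n) \<times> Pow (cube n)\<close>: the two halves of a uniformly random set are independent.
\<close>

lemma sum_Pow_cube_Suc:
  "(\<Sum>A\<in>Pow (cube (Suc n)). F (slice True A) (slice False A)) =
   (\<Sum>A1\<in>Pow (cube n). \<Sum>A2\<in>Pow (cube n). F A1 A2)"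
proof -
  define g where "g = (\<lambda>(A1, A2). Cons True ` A1 \<union> Cons False ` A2)"
  have bij: "bij_betw g (Pow (cube n) \<times> Pow (cube n)) (Pow (cube (Suc n)))"
  proof (rule bij_betw_byWitness[where f' = "\<lambda>A. (slice True A, slice False A)"])
    show "\<forall>A\<in>Pow (cube (Suc n)). g (slice True A, slice False A) = A"
      by (auto simp: g_def slice_def cube_Suc image_iff)
    show "(\<lambda>A. (slice True A, slice False A)) ` Pow (cube (Suc n)) \<subseteq> Pow (cube n) \<times> Pow (cube n)"
      by (auto simp: slice_def cube_def)
  qed (auto simp: g_def slice_def cube_Suc)
  have "(\<Sum>A\<in>Pow (cube (Suc n)). F (slice True A) (slice False A)) =
        (\<Sum>p\<in>Pow (cube n) \<times> Pow (cube n). F (slice True (g p)) (slice False (g p)))"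
    using sum.reindex_bij_betw[OF bij, of "\<lambda>A. F (slice True A) (slice False A)"] by simp
  also have "\<dots> = (\<Sum>p\<in>Pow (cube n) \<times> Pow (cube n). F (fst p) (snd p))"
  proof -
    have "slice True (g p) = fst p" "slice False (g p) = snd p" for p
      by (auto simp: g_def slice_def split: prod.splits)
    then show ?thesis by simp
  qed
  also have "\<dots> = (\<Sum>A1\<in>Pow (cube n). \<Sum>A2\<in>Pow (cube n). F A1 A2)"
    by (simp add: sum.cartesian_product split_beta)
  finally show ?thesis .
qed

lemma sum_Pow_cube_Suc_slices:
  "(\<Sum>A\<in>Pow (cube (Suc n)). F (slice b A) (slice (\<not> b) A)) =
   (\<Sum>A1\<in>Pow (cube n). \<Sum>A2\<in>Pow (cube n). F A1 A2)"
proof (cases b)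
  case False
  have "(\<Sum>A1\<in>Pow (cube n). \<Sum>A2\<in>Pow (cube n). F A2 A1) = (\<Sum>A2\<in>Pow (cube n). \<Sum>A1\<in>Pow (cube n). F A2 A1)"
    by (rule sum.swap)
  with False show ?thesis
    using sum_Pow_cube_Suc[of "\<lambda>A1 A2. F A2 A1"] by simp
qed (simp add: sum_Pow_cube_Suc)

lemma sum_Pow_prod_fibers:
  fixes G :: "bool list set \<Rightarrow> real"
  shows "(\<Sum>A\<in>Pow (cube (j + k)). \<Prod>v\<in>cube j. G (fiber v A)) = (\<Sum>B\<in>Pow (cube k). G B) ^ 2 ^ j"
proof (induction j)
  case 0
  then show ?case by (simp add: cube_0 fiber_Nil)
next
  case (Suc j)
  define H where "H = (\<lambda>A. \<Prod>v\<in>cube j. G (fiber v A))"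
  have "(\<Prod>v\<in>cube (Suc j). G (fiber v A)) = H (slice True A) * H (slice False A)" for A
    unfolding cube_Suc H_def
    by (subst prod.union_disjoint) (auto simp: prod.reindex fiber_Cons)
  then have "(\<Sum>A\<in>Pow (cube (Suc j + k)). \<Prod>v\<in>cube (Suc j). G (fiber v A))
      = (\<Sum>A1\<in>Pow (cube (j + k)). \<Sum>A2\<in>Pow (cube (j + k)). H A1 * H A2)"
    using sum_Pow_cube_Suc[of "\<lambda>A1 A2. H A1 * H A2"] by simp
  also have "\<dots> = (\<Sum>A\<in>Pow (cube (j + k)). H A) ^ 2"
    by (simp add: sum_product power2_eq_square)
  also have "\<dots> = (\<Sum>B\<in>Pow (cube k). G B) ^ 2 ^ Suc j"
    using Suc.IH by (simp add: H_def power_mult[symmetric] mult.commute)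
  finally show ?case .
qed

section \<open>Greedy matching of deficits to surpluses\<close>

datatype vertex_status = Deficit | Surplus | Settled

definition initial_status :: "bool list set \<Rightarrow> bool list \<Rightarrow> vertex_status" where
  "initial_status B u =
     (if u @ [True] \<in> B \<and> u @ [False] \<in> B then Surplus
      else if u @ [True] \<notin> B \<and> u @ [False] \<notin> B then Deficit else Settled)"

text \<open>
  For \<open>B \<subseteq> {0,1}\<^sup>k\<^sup>+\<^sup>1\<close> and \<open>u \<in> {0,1}\<^sup>k\<close>, \<open>status k B u\<close> is the status of \<open>u\<close> after the matching
  inside the subcube, and \<open>partner k B u\<close> the surplus a deficit \<open>u\<close> is matched to.
\<close>

fun status :: "nat \<Rightarrow> bool list set \<Rightarrow> bool list \<Rightarrow> vertex_status" where
  "status 0 B [] = initial_status B []"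
| "status 0 B (b # u) = Settled"
| "status (Suc k) B [] = Settled"
| "status (Suc k) B (b # u) =
     (let s = status k (slice b B) u; t = status k (slice (\<not> b) B) u in
      if (s = Deficit \<and> t = Surplus) \<or> (s = Surplus \<and> t = Deficit) then Settled else s)"

fun partner :: "nat \<Rightarrow> bool list set \<Rightarrow> bool list \<Rightarrow> bool list option" where
  "partner 0 B u = None"
| "partner (Suc k) B [] = None"
| "partner (Suc k) B (b # u) =
     (case partner k (slice b B) u of
        Some w \<Rightarrow> Some (b # w)
      | None \<Rightarrow>
          if status k (slice b B) u = Deficit \<and> status k (slice (\<not> b) B) u = Surplus
          then Some ((\<not> b) # u) else None)"

lemma initial_status_slice: "initial_status (slice b B) u = initial_status B (b # u)"
  by (simp add: initial_status_def slice_def)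

lemma status_imp_initial_status:
  "(status k B u = Deficit \<longrightarrow> initial_status B u = Deficit) \<and>
   (status k B u = Surplus \<longrightarrow> initial_status B u = Surplus)"
proof (induction k arbitrary: B u)
  case 0
  then show ?case by (cases u) auto
next
  case (Suc k)
  show ?case
  proof (cases u)
    case (Cons b u0)
    then show ?thesis
      using Suc.IH[of "slice b B" u0] by (auto simp: Let_def initial_status_slice split: if_splits)
  qed simp
qed

lemma length_if_status_not_Settled: "status k B u \<noteq> Settled \<Longrightarrow> length u = k"
proof (induction k arbitrary: B u)
  case 0
  then show ?case by (cases u) auto
next
  case (Suc k)
  then show ?case by (cases u) (auto simp: Let_def split: if_splits)
qed

lemma partner_flips_one_coordinate:
  "partner k B u = Some w \<Longrightarrow> length u = k \<and> (\<exists>i<k. w = u[i := \<not> u ! i])"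
proof (induction k arbitrary: B u w)
  case 0
  then show ?case by simp
next
  case (Suc k)
  then obtain b u0 where u: "u = b # u0" by (cases u) auto
  show ?case
  proof (cases "partner k (slice b B) u0")
    case None
    then have "status k (slice b B) u0 = Deficit" "w = (\<not> b) # u0"
      using Suc.prems u by (auto split: if_splits)
    then show ?thesis
      using u length_if_status_not_Settled[of k "slice b B" u0] by (auto intro: exI[of _ 0])
  next
    case (Some w0)
    with Suc.prems u have "w = b # w0" by simp
    moreover obtain i where "i < k" "w0 = u0[i := \<not> u0 ! i]" "length u0 = k"
      using Suc.IH[OF Some] by blast
    ultimately show ?thesis using u by (intro conjI exI[of _ "Suc i"]) auto
  qed
qed

lemma length_partner: "partner k B u = Some w \<Longrightarrow> length w = k"
  using partner_flips_one_coordinate by fastforce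

lemma partner_initial_status:
  "partner k B u = Some w \<Longrightarrow> initial_status B u = Deficit \<and> initial_status B w = Surplus"
proof (induction k arbitrary: B u w)
  case 0
  then show ?case by simp
next
  case (Suc k)
  then obtain b u0 where u: "u = b # u0" by (cases u) auto
  show ?case
  proof (cases "partner k (slice b B) u0")
    case None
    then have "status k (slice b B) u0 = Deficit" "status k (slice (\<not> b) B) u0 = Surplus"
      "w = (\<not> b) # u0"
      using Suc.prems u by (auto split: if_splits)
    then show ?thesis
      using status_imp_initial_status[of k "slice b B" u0]
        status_imp_initial_status[of k "slice (\<not> b) B" u0] u
      by (simp add: initial_status_slice)
  next
    case (Some w0)
    with Suc.prems u have "w = b # w0" by simp
    with Suc.IH[OF Some] u show ?thesis by (simp add: initial_status_slice)
  qed
qed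

lemma status_Deficit_iff:
  "length u = k \<Longrightarrow> status k B u = Deficit \<longleftrightarrow> initial_status B u = Deficit \<and> partner k B u = None"
proof (induction k arbitrary: B u)
  case 0
  then show ?case by simp
next
  case (Suc k)
  then obtain b u0 where u: "u = b # u0" and l: "length u0 = k" by (cases u) auto
  show ?case using Suc.IH[OF l, of "slice b B"] u
    by (auto simp: Let_def initial_status_slice split: option.splits if_splits)
qed

lemma status_Cons_Deficit_iff:
  "status (Suc k) B (b # u) = Deficit \<longleftrightarrow>
   status k (slice b B) u = Deficit \<and> status k (slice (\<not> b) B) u \<noteq> Surplus"
  by (auto simp: Let_def)

lemma partner_Suc_eq_Cons_iff:
  "(\<exists>u'. partner (Suc k) B u' = Some (b # w)) \<longleftrightarrow>
   (\<exists>u'. partner k (slice b B) u' = Some w) \<or>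
   (partner k (slice (\<not> b) B) w = None \<and> status k (slice (\<not> b) B) w = Deficit \<and>
    status k (slice b B) w = Surplus)"
proof
  assume "\<exists>u'. partner (Suc k) B u' = Some (b # w)"
  then obtain c u where h: "partner (Suc k) B (c # u) = Some (b # w)"
    by (metis partner.simps(2) neq_Nil_conv option.distinct(1))
  then show "(\<exists>u'. partner k (slice b B) u' = Some w) \<or>
    (partner k (slice (\<not> b) B) w = None \<and> status k (slice (\<not> b) B) w = Deficit \<and>
     status k (slice b B) w = Surplus)"
    by (cases "partner k (slice c B) u") (auto split: if_splits)
next
  assume "(\<exists>u'. partner k (slice b B) u' = Some w) \<or>
    (partner k (slice (\<not> b) B) w = None \<and> status k (slice (\<not> b) B) w = Deficit \<and>
     status k (slice b B) w = Surplus)"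
  then show "\<exists>u'. partner (Suc k) B u' = Some (b # w)"
  proof
    assume "\<exists>u'. partner k (slice b B) u' = Some w"
    then obtain u' where "partner k (slice b B) u' = Some w" by blast
    then have "partner (Suc k) B (b # u') = Some (b # w)" by simp
    then show ?thesis by blast
  next
    assume "partner k (slice (\<not> b) B) w = None \<and> status k (slice (\<not> b) B) w = Deficit \<and>
      status k (slice b B) w = Surplus"
    then have "partner (Suc k) B ((\<not> b) # w) = Some (b # w)" by simp
    then show ?thesis by blast
  qed
qed

lemma status_Surplus_iff:
  "length u = k \<Longrightarrow>
   status k B u = Surplus \<longleftrightarrow> initial_status B u = Surplus \<and> (\<forall>u'. partner k B u' \<noteq> Some u)"
proof (induction k arbitrary: B u)
  case 0
  then show ?case by simp
next
  case (Suc k)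
  then obtain b u0 where u: "u = b # u0" and l: "length u0 = k" by (cases u) auto
  show ?case
    using Suc.IH[OF l, of "slice b B"] status_Deficit_iff[OF l, of "slice (\<not> b) B"]
      partner_Suc_eq_Cons_iff[of k B b u0] u
    by (auto simp: Let_def initial_status_slice)
qed

lemma partner_inj: "partner k B u1 = Some w \<Longrightarrow> partner k B u2 = Some w \<Longrightarrow> u1 = u2"
proof (induction k arbitrary: B u1 u2 w)
  case 0
  then show ?case by simp
next
  case (Suc k)
  obtain c1 v1 where u1: "u1 = c1 # v1" using Suc.prems by (cases u1) auto
  obtain c2 v2 where u2: "u2 = c2 # v2" using Suc.prems by (cases u2) auto
  \<comment> \<open>a recursively matched surplus is not available for a new match\<close>
  have old_new: False
    if old: "partner k (slice c B) v = Some w0"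
      and new: "status k (slice d B) v' = Deficit" "status k (slice (\<not> d) B) v' = Surplus"
      and eq: "c # w0 = (\<not> d) # v'" for c d v v' w0
  proof -
    have "c = (\<not> d)" "w0 = v'" using eq by auto
    moreover have "length v' = k" using length_partner[OF old] \<open>w0 = v'\<close> by simp
    ultimately show False using status_Surplus_iff[of v' k "slice c B"] new old by auto
  qed
  show ?case
  proof (cases "partner k (slice c1 B) v1"; cases "partner k (slice c2 B) v2")
    fix w1 w2 assume "partner k (slice c1 B) v1 = Some w1" "partner k (slice c2 B) v2 = Some w2"
    then show ?thesis using Suc.prems u1 u2 Suc.IH[of "slice c1 B" v1 w1 v2] by auto
  qed (use Suc.prems u1 u2 old_new in \<open>auto split: if_splits\<close>)
qed

fun swap_status :: "vertex_status \<Rightarrow> vertex_status" where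
  "swap_status Deficit = Surplus"
| "swap_status Surplus = Deficit"
| "swap_status Settled = Settled"

lemma status_complement:
  "length u = k \<Longrightarrow> status k (cube (Suc k) - B) u = swap_status (status k B u)"
proof (induction k arbitrary: B u)
  case 0
  then show ?case by (auto simp: initial_status_def cube_def)
next
  case (Suc k)
  then obtain b u0 where u: "u = b # u0" and l: "length u0 = k" by (cases u) auto
  have [simp]: "swap_status x = swap_status y \<longleftrightarrow> x = y" for x y
    by (cases x; cases y) auto
  have [simp]: "swap_status x = Deficit \<longleftrightarrow> x = Surplus" "swap_status x = Surplus \<longleftrightarrow> x = Deficit"
    for x by (cases x; simp)+
  show ?case
    using Suc.IH[OF l, of "slice b B"] Suc.IH[OF l, of "slice (\<not> b) B"] u
    by (auto simp: Let_def slice_complement)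
qed

section \<open>The probability of remaining a deficit\<close>

text \<open>
  Probabilities over a uniformly random \<open>B \<subseteq> cube (Suc k)\<close> are handled as counts: the
  probability that \<open>u\<close> remains a deficit is \<open>deficit_count k u / 2 ^ 2 ^ Suc k\<close>.
\<close>

definition deficit_count :: "nat \<Rightarrow> bool list \<Rightarrow> real" where
  "deficit_count k u = real (card {B \<in> Pow (cube (Suc k)). status k B u = Deficit})"

lemma card_status_Surplus:
  assumes "length u = k"
  shows "real (card {B \<in> Pow (cube (Suc k)). status k B u = Surplus}) = deficit_count k u"
proof -
  have "bij_betw (\<lambda>B. cube (Suc k) - B) {B \<in> Pow (cube (Suc k)). status k B u = Surplus}
          {B \<in> Pow (cube (Suc k)). status k B u = Deficit}"
  proof (rule bij_betw_byWitness[where f' = "\<lambda>B. cube (Suc k) - B"])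
    have [simp]: "status k (cube (Suc k) - B) u = Deficit \<longleftrightarrow> status k B u = Surplus"
      "status k (cube (Suc k) - B) u = Surplus \<longleftrightarrow> status k B u = Deficit" for B
      using status_complement[OF assms, of B] by (cases "status k B u"; simp)+
    show "\<forall>B\<in>{B \<in> Pow (cube (Suc k)). status k B u = Surplus}. cube (Suc k) - (cube (Suc k) - B) = B"
      by auto
    show "\<forall>B\<in>{B \<in> Pow (cube (Suc k)). status k B u = Deficit}. cube (Suc k) - (cube (Suc k) - B) = B"
      by auto
    show "(\<lambda>B. cube (Suc k) - B) ` {B \<in> Pow (cube (Suc k)). status k B u = Surplus}
          \<subseteq> {B \<in> Pow (cube (Suc k)). status k B u = Deficit}"
      by auto
    show "(\<lambda>B. cube (Suc k) - B) ` {B \<in> Pow (cube (Suc k)). status k B u = Deficit}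
          \<subseteq> {B \<in> Pow (cube (Suc k)). status k B u = Surplus}"
      by auto
  qed
  then show ?thesis unfolding deficit_count_def by (simp add: bij_betw_same_card)
qed

lemma card_status_not_Surplus:
  assumes "length u = k"
  shows "real (card {B \<in> Pow (cube (Suc k)). status k B u \<noteq> Surplus}) = 2 ^ 2 ^ Suc k - deficit_count k u"
proof -
  let ?S = "{B \<in> Pow (cube (Suc k)). status k B u = Surplus}"
  have "{B \<in> Pow (cube (Suc k)). status k B u \<noteq> Surplus} = Pow (cube (Suc k)) - ?S"
    by blast
  moreover have "card (Pow (cube (Suc k)) - ?S) = card (Pow (cube (Suc k))) - card ?S"
    by (rule card_Diff_subset) auto
  moreover have "card ?S \<le> card (Pow (cube (Suc k)))"
    by (rule card_mono) auto
  ultimately show ?thesis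
    using card_status_Surplus[OF assms] by (simp add: of_nat_diff card_Pow_cube)
qed

lemma deficit_count_Cons:
  assumes "length u = k"
  shows "deficit_count (Suc k) (b # u) = deficit_count k u * (2 ^ 2 ^ Suc k - deficit_count k u)"
proof -
  let ?D = "{B \<in> Pow (cube (Suc k)). status k B u = Deficit}"
    and ?N = "{B \<in> Pow (cube (Suc k)). status k B u \<noteq> Surplus}"
  have "{B \<in> Pow (cube (Suc (Suc k))). status (Suc k) B (b # u) = Deficit} =
        Pow (cube (Suc (Suc k))) \<inter> {B. slice b B \<in> ?D \<and> slice (\<not> b) B \<in> ?N}"
  proof -
    have "B \<subseteq> cube (Suc (Suc k)) \<Longrightarrow> slice c B \<subseteq> cube (Suc k)" for B c
      by (auto simp: slice_def cube_def)
    then show ?thesis by (auto simp del: status.simps simp: status_Cons_Deficit_iff)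
  qed
  then have "deficit_count (Suc k) (b # u) =
      (\<Sum>B\<in>Pow (cube (Suc (Suc k))). of_bool (slice b B \<in> ?D) * of_bool (slice (\<not> b) B \<in> ?N))"
    by (simp add: deficit_count_def flip: of_bool_conj)
  also have "\<dots> = (\<Sum>A\<in>Pow (cube (Suc k)). of_bool (A \<in> ?D)) * (\<Sum>A\<in>Pow (cube (Suc k)). of_bool (A \<in> ?N))"
    unfolding sum_product by (rule sum_Pow_cube_Suc_slices)
  also have "(\<Sum>A\<in>Pow (cube (Suc k)). of_bool (A \<in> ?D)) = deficit_count k u"
    by (simp add: deficit_count_def Int_def)
  also have "(\<Sum>A\<in>Pow (cube (Suc k)). of_bool (A \<in> ?N)) = 2 ^ 2 ^ Suc k - deficit_count k u"
    using card_status_not_Surplus[OF assms] by (simp add: Int_def)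
  finally show ?thesis .
qed

lemma logistic_step_le:
  fixes p T k :: real
  assumes "0 \<le> p" "p \<le> T / (k + 4)" "0 < T" "0 \<le> k"
  shows "p * (T - p) \<le> T\<^sup>2 / (k + 5)"
proof -
  define a where "a = T / (k + 4)"
  have a: "p \<le> a" "a \<le> T / 2" using assms by (auto simp: a_def field_simps)
  have "p * (T - p) \<le> a * (T - a)"
  proof -
    have "a * (T - a) - p * (T - p) = (a - p) * (T - a - p)" by (simp add: algebra_simps)
    also have "\<dots> \<ge> 0" using a by (intro mult_nonneg_nonneg) auto
    finally show ?thesis by simp
  qed
  also have "a * (T - a) = T\<^sup>2 * ((k + 3) / (k + 4)\<^sup>2)"
    using assms by (simp add: a_def field_simps power2_eq_square)
  also have "\<dots> \<le> T\<^sup>2 * (1 / (k + 5))"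
  proof (rule mult_left_mono)
    have "(k + 3) * (k + 5) \<le> (k + 4)\<^sup>2" by (simp add: power2_eq_square algebra_simps)
    then show "(k + 3) / (k + 4)\<^sup>2 \<le> 1 / (k + 5)" using assms by (simp add: field_simps)
  qed simp
  finally show ?thesis by simp
qed

lemma deficit_count_le:
  "length u = k \<Longrightarrow> deficit_count k u \<le> 2 ^ 2 ^ Suc k / (real k + 4)"
proof (induction k arbitrary: u)
  case 0
  then have "{B \<in> Pow (cube (Suc 0)). status 0 B u = Deficit} = {{}}"
    by (auto simp: cube_Suc cube_0 initial_status_def)
  then show ?case by (simp add: deficit_count_def)
next
  case (Suc k)
  then obtain b u0 where u: "u = b # u0" and l: "length u0 = k" by (cases u) auto
  define T :: real where "T = 2 ^ 2 ^ Suc k"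
  have IH: "0 \<le> deficit_count k u0" "deficit_count k u0 \<le> T / (real k + 4)"
    using Suc.IH[OF l] by (auto simp: T_def deficit_count_def)
  have "deficit_count (Suc k) u = deficit_count k u0 * (T - deficit_count k u0)"
    using deficit_count_Cons[OF l] u by (simp add: T_def)
  also have "\<dots> \<le> T\<^sup>2 / (real k + 5)"
    by (rule logistic_step_le[OF IH]) (auto simp: T_def)
  also have "T\<^sup>2 = 2 ^ 2 ^ Suc (Suc k)"
    by (simp add: T_def power_mult[symmetric] mult.commute)
  finally show ?case by (simp add: add.commute)
qed

definition deficits :: "nat \<Rightarrow> bool list set \<Rightarrow> real" where
  "deficits K B = real (card {u \<in> cube K. status K B u = Deficit})"

lemma deficits_le: "deficits K B \<le> 2 ^ K"
  using card_mono[of "cube K" "{u \<in> cube K. status K B u = Deficit}"]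
  by (simp add: deficits_def card_cube)

lemma sum_deficits_le:
  "(\<Sum>B\<in>Pow (cube (Suc K)). deficits K B) \<le> 2 ^ K * (2 ^ 2 ^ Suc K / (real K + 4))"
proof -
  have "(\<Sum>B\<in>Pow (cube (Suc K)). deficits K B) = (\<Sum>u\<in>cube K. deficit_count K u)"
  proof -
    have "(\<Sum>B\<in>Pow (cube (Suc K)). deficits K B) =
          (\<Sum>B\<in>Pow (cube (Suc K)). \<Sum>u\<in>cube K. of_bool (status K B u = Deficit))"
      by (simp add: deficits_def Int_def)
    also have "\<dots> = (\<Sum>u\<in>cube K. \<Sum>B\<in>Pow (cube (Suc K)). of_bool (status K B u = Deficit))"
      by (rule sum.swap)
    finally show ?thesis by (simp add: deficit_count_def Int_def)
  qed
  also have "\<dots> \<le> (\<Sum>u\<in>cube K. 2 ^ 2 ^ Suc K / (real K + 4))"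
    by (intro sum_mono deficit_count_le) (simp add: cube_def)
  also have "\<dots> = 2 ^ K * (2 ^ 2 ^ Suc K / (real K + 4))"
    by (simp add: card_cube)
  finally show ?thesis .
qed

section \<open>Large deviations for the total number of deficits\<close>

definition load :: "nat \<Rightarrow> nat \<Rightarrow> bool list set \<Rightarrow> real" where
  "load K j A = (\<Sum>v\<in>cube j. deficits K (fiber v A) / 2 ^ K)"

lemma powr_le_affine:
  fixes b y :: real
  assumes "1 \<le> b" "0 \<le> y" "y \<le> 1"
  shows "b powr y \<le> 1 + (b - 1) * y"
proof -
  have "convex_on UNIV (\<lambda>x. exp (ln b * x))"
    using assms(1) by (intro convex_on_exp) simp
  then have "exp (ln b * ((1 - y) *\<^sub>R 0 + y *\<^sub>R 1)) \<le> (1 - y) * exp (ln b * 0) + y * exp (ln b * 1)"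
    by (rule convex_onD) (use assms in auto)
  then show ?thesis using assms by (simp add: powr_def algebra_simps)
qed

lemma exp_le_two_powr:
  fixes x :: real
  assumes "0 \<le> x"
  shows "exp x \<le> 2 powr (2 * x)"
proof -
  have "x * (2 / 3) \<le> x * ln 2"
    using ln2_ge_two_thirds assms by (rule mult_left_mono)
  then have "x \<le> 2 * x * ln 2"
    using assms by linarith
  then show ?thesis by (simp add: powr_def mult.commute)
qed

lemma sum_two_powr_load_le:
  "(\<Sum>A\<in>Pow (cube (j + Suc K)). 2 powr load K j A)
     \<le> real (card (Pow (cube (j + Suc K)))) * 2 powr (2 * (2 ^ j / (real K + 4)))"
proof -
  define T :: real where "T = 2 ^ 2 ^ Suc K"
  define \<mu> :: real where "\<mu> = 1 / (real K + 4)"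
  have block: "(\<Sum>B\<in>Pow (cube (Suc K)). 2 powr (deficits K B / 2 ^ K)) \<le> T * (1 + \<mu>)"
  proof -
    have "(\<Sum>B\<in>Pow (cube (Suc K)). 2 powr (deficits K B / 2 ^ K))
        \<le> (\<Sum>B\<in>Pow (cube (Suc K)). 1 + deficits K B / 2 ^ K)"
    proof (intro sum_mono order.trans[OF powr_le_affine])
      fix B
      show "0 \<le> deficits K B / 2 ^ K" "deficits K B / 2 ^ K \<le> 1"
        using deficits_le[of K B] by (simp_all add: deficits_def)
    qed simp_all
    also have "\<dots> = T + (\<Sum>B\<in>Pow (cube (Suc K)). deficits K B) / 2 ^ K"
      by (simp add: sum.distrib sum_divide_distrib card_Pow_cube T_def del: Pow_iff)
    also have "\<dots> \<le> T * (1 + \<mu>)"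
      using sum_deficits_le[of K] by (simp add: T_def \<mu>_def field_simps)
    finally show ?thesis .
  qed
  have "(\<Sum>A\<in>Pow (cube (j + Suc K)). 2 powr load K j A)
      = (\<Sum>B\<in>Pow (cube (Suc K)). 2 powr (deficits K B / 2 ^ K)) ^ 2 ^ j"
  proof -
    have "2 powr load K j A = (\<Prod>v\<in>cube j. 2 powr (deficits K (fiber v A) / 2 ^ K))" for A
      by (simp add: load_def powr_sum)
    then show ?thesis
      using sum_Pow_prod_fibers[of "\<lambda>B. 2 powr (deficits K B / 2 ^ K)" j "Suc K"] by simp
  qed
  also have "\<dots> \<le> (T * (1 + \<mu>)) ^ 2 ^ j"
    by (intro power_mono block sum_nonneg) simp
  also have "\<dots> = T ^ 2 ^ j * (1 + \<mu>) ^ 2 ^ j"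
    by (simp add: power_mult_distrib)
  also have "(1 + \<mu>) ^ 2 ^ j \<le> exp \<mu> ^ 2 ^ j"
    by (intro power_mono) (auto simp: \<mu>_def)
  also have "exp \<mu> ^ 2 ^ j = exp (\<mu> * 2 ^ j)"
    by (simp add: exp_of_nat_mult[symmetric] mult.commute)
  also have "\<dots> \<le> 2 powr (2 * (2 ^ j / (real K + 4)))"
    by (rule order.trans[OF exp_le_two_powr]) (simp_all add: \<mu>_def)
  also have "T ^ 2 ^ j = real (card (Pow (cube (j + Suc K))))"
    by (simp add: T_def card_Pow_cube power_mult[symmetric] power_add mult.commute)
  finally show ?thesis by (simp add: T_def)
qed

lemma card_heavy_load_le:
  "real (card {A \<in> Pow (cube (j + Suc K)). 3 * 2 ^ j / (real K + 4) \<le> load K j A})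
     \<le> real (card (Pow (cube (j + Suc K)))) * 2 powr (- (2 ^ j / (real K + 4)))"
proof -
  define s :: real where "s = 2 ^ j / (real K + 4)"
  let ?heavy = "{A \<in> Pow (cube (j + Suc K)). 3 * s \<le> load K j A}"
  have "real (card ?heavy) * 2 powr (3 * s) = (\<Sum>A\<in>?heavy. 2 powr (3 * s))"
    by simp
  also have "\<dots> \<le> (\<Sum>A\<in>?heavy. 2 powr load K j A)"
    by (intro sum_mono) auto
  also have "\<dots> \<le> (\<Sum>A\<in>Pow (cube (j + Suc K)). 2 powr load K j A)"
    by (intro sum_mono2) auto
  also have "\<dots> \<le> real (card (Pow (cube (j + Suc K)))) * 2 powr (2 * s)"
    using sum_two_powr_load_le by (simp add: s_def)
  also have "2 powr (2 * s) = 2 powr (- s) * 2 powr (3 * s)"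
    by (smt (verit) powr_add)
  finally show ?thesis by (simp add: s_def)
qed

section \<open>The lifting map\<close>

definition block_lift :: "nat \<Rightarrow> bool list set \<Rightarrow> bool list \<Rightarrow> bool list" where
  "block_lift K B u =
     (case partner K B u of
        Some w \<Rightarrow> w @ [False]
      | None \<Rightarrow> if u @ [True] \<in> B then u @ [True] else u @ [False])"

lemma block_lift_in_cube: "u \<in> cube K \<Longrightarrow> block_lift K B u \<in> cube (Suc K)"
  by (auto simp: block_lift_def cube_def length_partner split: option.splits)

lemma take_block_lift:
  assumes "u \<in> cube K"
  shows "take K (block_lift K B u) = u \<or> (\<exists>i<K. take K (block_lift K B u) = u[i := \<not> u ! i])"
proof (cases "partner K B u")
  case (Some w)
  then obtain i where "i < K" "w = u[i := \<not> u ! i]"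
    using partner_flips_one_coordinate by blast
  with Some length_partner[OF Some] show ?thesis by (auto simp: block_lift_def)
qed (use assms in \<open>auto simp: block_lift_def cube_def\<close>)

lemma partner_lifts_mem: "partner K B u = Some w \<Longrightarrow> w @ [True] \<in> B \<and> w @ [False] \<in> B"
  using partner_initial_status[of K B u w] by (simp add: initial_status_def split: if_splits)

lemma status_Deficit_if_block_lift_notin:
  assumes "u \<in> cube K" "block_lift K B u \<notin> B"
  shows "status K B u = Deficit"
proof (cases "partner K B u")
  case None
  then show ?thesis
    using assms status_Deficit_iff[of u K B]
    by (auto simp: block_lift_def initial_status_def cube_def split: if_splits)
next
  case (Some w)
  with assms partner_lifts_mem[OF Some] show ?thesis by (simp add: block_lift_def)
qed

lemma block_lift_inj: "inj_on (block_lift K B) (cube K)"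
proof (rule inj_onI)
  fix u1 u2 assume eq: "block_lift K B u1 = block_lift K B u2"
  \<comment> \<open>a matched surplus \<open>w\<close> is itself sent to \<open>w @ [True]\<close>, leaving \<open>w @ [False]\<close> to its partner\<close>
  show "u1 = u2"
  proof (cases "partner K B u1"; cases "partner K B u2")
    fix w1 w2 assume "partner K B u1 = Some w1" "partner K B u2 = Some w2"
    then show ?thesis using eq partner_inj[of K B u1 w1 u2] by (simp add: block_lift_def)
  qed (use eq partner_lifts_mem in \<open>auto simp: block_lift_def split: if_splits\<close>)
qed

definition lift :: "nat \<Rightarrow> nat \<Rightarrow> bool list set \<Rightarrow> bool list \<Rightarrow> bool list" where
  "lift K j A x = take j x @ block_lift K (fiber (take j x) A) (drop j x)"

lemma hamming_list_update_le: "hamming x (x[i := c]) \<le> 1"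
proof -
  have "{l. l < length x \<and> x ! l \<noteq> x[i := c] ! l} \<subseteq> {i}"
    by clarsimp (metis nth_list_update_neq)
  then have "card {l. l < length x \<and> x ! l \<noteq> x[i := c] ! l} \<le> card {i}"
    by (intro card_mono) auto
  then show ?thesis by (simp add: hamming_def)
qed

lemma take_in_cube: "x \<in> cube (j + k) \<Longrightarrow> take j x \<in> cube j"
  by (simp add: cube_def)

lemma drop_in_cube: "x \<in> cube (j + k) \<Longrightarrow> drop j x \<in> cube k"
  by (simp add: cube_def)

lemma lift_in_cube: "x \<in> cube (j + K) \<Longrightarrow> lift K j A x \<in> cube (j + K + 1)"
  using block_lift_in_cube[OF drop_in_cube] take_in_cube by (simp add: lift_def cube_def)

lemma lift_mem_iff: "lift K j A x \<in> A \<longleftrightarrow> block_lift K (fiber (take j x) A) (drop j x) \<in> fiber (take j x) A"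
  by (simp add: lift_def fiber_def)

lemma hamming_take_lift_le:
  assumes x: "x \<in> cube (j + K)"
  shows "hamming x (take (j + K) (lift K j A x)) \<le> 1"
proof -
  have v: "length (take j x) = j" using take_in_cube[OF x] by (simp add: cube_def)
  have "take (j + K) (lift K j A x) = take j x @ take K (block_lift K (fiber (take j x) A) (drop j x))"
    using v by (simp add: lift_def)
  moreover have "take j x @ (drop j x)[i := c] = x[j + i := c]" for i c
    using v by (metis append_take_drop_id list_update_append1 list_update_append add_diff_cancel_left'
        not_add_less1)
  ultimately show ?thesis
    using take_block_lift[OF drop_in_cube[OF x], of "fiber (take j x) A"] hamming_list_update_le[of x]
    by (auto simp: hamming_def)
qed

lemma card_lift_notin_le:
  "real (card {x \<in> cube (j + K). lift K j A x \<notin> A}) \<le> 2 ^ K * load K j A"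
proof -
  have "card {x \<in> cube (j + K). lift K j A x \<notin> A}
     \<le> card {x \<in> cube (j + K). status K (fiber (take j x) A) (drop j x) = Deficit}"
    by (rule card_mono)
       (auto simp: lift_mem_iff intro: status_Deficit_if_block_lift_notin drop_in_cube)
  also have "\<dots> = (\<Sum>v\<in>cube j. card {u \<in> cube K. status K (fiber v A) u = Deficit})"
    by (rule card_cube_add)
  finally show ?thesis
    by (simp add: load_def deficits_def sum_divide_distrib[symmetric] flip: of_nat_sum)
qed

lemma lift_inj: "inj_on (lift K j A) (cube (j + K))"
proof (rule inj_onI)
  fix x1 x2 assume x: "x1 \<in> cube (j + K)" "x2 \<in> cube (j + K)" and eq: "lift K j A x1 = lift K j A x2"
  then have v: "take j x1 = take j x2"
    unfolding lift_def cube_def by (simp add: append_eq_append_conv)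
  with eq have "block_lift K (fiber (take j x1) A) (drop j x1) = block_lift K (fiber (take j x1) A) (drop j x2)"
    by (simp add: lift_def)
  then have "drop j x1 = drop j x2"
    using inj_onD[OF block_lift_inj _ drop_in_cube[OF x(1)] drop_in_cube[OF x(2)]] by blast
  with v show "x1 = x2" by (metis append_take_drop_id)
qed

section \<open>Most sets admit a good lift\<close>

lemma prob_pmf_of_set_ge:
  assumes "finite S" "S \<noteq> {}" "real (card (S - E)) \<le> \<epsilon> * real (card S)"
  shows "measure_pmf.prob (pmf_of_set S) E \<ge> 1 - \<epsilon>"
proof -
  have "card S = card (S \<inter> E) + card (S - E)"
    using assms(1) by (rule card_Int_Diff)
  then have "(1 - \<epsilon>) * real (card S) \<le> real (card (S \<inter> E))"
    using assms(3) by (simp add: algebra_simps)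
  then show ?thesis
    using assms(1,2) by (simp add: measure_pmf_of_set pos_le_divide_eq card_gt_0_iff)
qed

definition good_lift :: "nat \<Rightarrow> real \<Rightarrow> bool list set \<Rightarrow> (bool list \<Rightarrow> bool list) \<Rightarrow> bool" where
  "good_lift n C A \<phi> \<longleftrightarrow>
     inj_on \<phi> (cube (n - 1)) \<and> \<phi> ` cube (n - 1) \<subseteq> cube n \<and>
     (\<forall>x\<in>cube (n - 1). hamming x (take (n - 1) (\<phi> x)) \<le> 1) \<and>
     measure_pmf.prob (pmf_of_set (cube (n - 1))) {x. \<phi> x \<in> A} \<ge> 1 - C / real n"

lemma good_lift_append_True:
  assumes "1 \<le> n" "real n \<le> C"
  shows "good_lift n C A (\<lambda>x. x @ [True])"
  unfolding good_lift_def
proof (intro conjI)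
  show "inj_on (\<lambda>x. x @ [True]) (cube (n - 1))"
    by (simp add: inj_on_def)
  show "(\<lambda>x. x @ [True]) ` cube (n - 1) \<subseteq> cube n"
    using assms(1) by (auto simp: cube_def)
  show "\<forall>x\<in>cube (n - 1). hamming x (take (n - 1) (x @ [True])) \<le> 1"
    by (simp add: cube_def hamming_def)
  have "1 - C / real n \<le> 0"
    using assms by (simp add: field_simps)
  then show "1 - C / real n \<le> measure_pmf.prob (pmf_of_set (cube (n - 1))) {x. x @ [True] \<in> A}"
    using measure_nonneg order.trans by blast
qed

lemma good_lift_lift:
  assumes n: "n = j + K + 1" and C: "load K j A / 2 ^ j \<le> C / real n"
  shows "good_lift n C A (lift K j A)"
proof -
  have "real (card (cube (j + K) - {x. lift K j A x \<in> A}))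
      \<le> load K j A / 2 ^ j * real (card (cube (j + K)))"
    using card_lift_notin_le[of j K A]
    by (simp add: set_diff_eq card_cube power_add field_simps)
  then have "measure_pmf.prob (pmf_of_set (cube (j + K))) {x. lift K j A x \<in> A} \<ge> 1 - C / real n"
    using prob_pmf_of_set_ge[of "cube (j + K)"] C by fastforce
  then show ?thesis
    using n lift_inj lift_in_cube hamming_take_lift_le by (auto simp: good_lift_def)
qed

lemma two_powr_le_two_power_div:
  assumes "40 \<le> n" "K = (n - 1) div 2" "j = n - 1 - K"
  shows "2 powr (1/8 * real n) \<le> 2 ^ j / (real K + 4)"
proof -
  define i where "i = j div 2"
  have i: "4 \<le> i" "n \<le> 8 * i" "2 * i \<le> j" "K \<le> 2 * i + 1"
    using assms unfolding i_def by linarith+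
  have "2 * i + 5 \<le> (2::nat) ^ i"
    using i(1) by (induction i rule: nat_induct_at_least) simp_all
  then have "K + 4 \<le> (2::nat) ^ i"
    using i(4) by linarith
  then have "real K + 4 \<le> 2 ^ i"
    by (metis of_nat_add of_nat_le_iff of_nat_numeral of_nat_power)
  then have "2 ^ i * (real K + 4) \<le> 2 ^ i * 2 ^ i"
    by (intro mult_left_mono) simp_all
  also have "\<dots> \<le> (2::real) ^ j"
    using i(3) by (simp flip: power_add)
  finally have "2 ^ i \<le> (2::real) ^ j / (real K + 4)"
    by (simp add: field_simps)
  moreover have "2 powr (1/8 * real n) \<le> 2 ^ i"
    using i(2) by (simp add: powr_realpow[symmetric])
  ultimately show ?thesis by linarith
qed

lemma prob_good_lift_ge:
  assumes n: "40 \<le> n"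
  shows "measure_pmf.prob (pmf_of_set (Pow (cube n))) {A. \<exists>\<phi>. good_lift n 40 A \<phi>}
           \<ge> 1 - 2 powr (- (2 powr (1/8 * real n)))"
proof -
  define K where "K = (n - 1) div 2"
  define j where "j = n - 1 - K"
  have nKj: "n = j + Suc K" using n by (simp add: K_def j_def)
  let ?heavy = "{A \<in> Pow (cube n). 3 * 2 ^ j / (real K + 4) \<le> load K j A}"
  have "3 / (real K + 4) \<le> 40 / real n"
    using n by (simp add: K_def field_simps)
  have "A \<in> ?heavy" if A: "A \<in> Pow (cube n)" "\<nexists>\<phi>. good_lift n 40 A \<phi>" for A
  proof (rule ccontr)
    assume "A \<notin> ?heavy"
    with A have "load K j A / 2 ^ j \<le> 3 / (real K + 4)"
      by (simp add: field_simps)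
    then have "good_lift n 40 A (lift K j A)"
      using \<open>3 / (real K + 4) \<le> 40 / real n\<close> by (intro good_lift_lift) (simp_all add: nKj)
    with A show False by blast
  qed
  then have "Pow (cube n) - {A. \<exists>\<phi>. good_lift n 40 A \<phi>} \<subseteq> ?heavy"
    by blast
  then have "real (card (Pow (cube n) - {A. \<exists>\<phi>. good_lift n 40 A \<phi>})) \<le> real (card ?heavy)"
    by (intro of_nat_mono card_mono) auto
  also have "\<dots> \<le> real (card (Pow (cube n))) * 2 powr (- (2 ^ j / (real K + 4)))"
    using card_heavy_load_le[of j K] by (simp add: nKj)
  also have "\<dots> \<le> real (card (Pow (cube n))) * 2 powr (- (2 powr (1/8 * real n)))"
    using two_powr_le_two_power_div[OF n K_def j_def] by (intro mult_left_mono) simp_all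
  finally show ?thesis
    by (intro prob_pmf_of_set_ge) (simp_all add: Pow_not_empty mult.commute)
qed

theorem mainTheorem9:
  shows "\<exists>c::real. \<exists>C::real. c > 0 \<and> (\<forall>n::nat. n \<ge> 1 \<longrightarrow>
    measure_pmf.prob (pmf_of_set (Pow (cube n)))
      {A. \<exists>\<phi> :: bool list \<Rightarrow> bool list.
            inj_on \<phi> (cube (n - 1)) \<and> \<phi> ` cube (n - 1) \<subseteq> cube n \<and>
            (\<forall>x\<in>cube (n - 1). hamming x (take (n - 1) (\<phi> x)) \<le> 1) \<and>
            measure_pmf.prob (pmf_of_set (cube (n - 1))) {x. \<phi> x \<in> A} \<ge> 1 - C / real n}
    \<ge> 1 - 2 powr (- (2 powr (c * real n))))"
proof (intro exI conjI allI impI)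
  fix n :: nat
  assume n: "1 \<le> n"
  let ?P = "pmf_of_set (Pow (cube n))"
  have "measure_pmf.prob ?P {A. \<exists>\<phi>. good_lift n 40 A \<phi>} \<ge> 1 - 2 powr (- (2 powr (1/8 * real n)))"
  proof (cases "40 \<le> n")
    case True
    then show ?thesis by (rule prob_good_lift_ge)
  next
    case False
    then have "good_lift n 40 A (\<lambda>x. x @ [True])" for A
      using good_lift_append_True[OF n] by simp
    then have empty: "Pow (cube n) - {A. \<exists>\<phi>. good_lift n 40 A \<phi>} = {}"
      by blast
    show ?thesis
      by (intro prob_pmf_of_set_ge) (simp_all add: Pow_not_empty empty)
  qed
  then show "measure_pmf.prob ?P
      {A. \<exists>\<phi>. inj_on \<phi> (cube (n - 1)) \<and> \<phi> ` cube (n - 1) \<subseteq> cube n \<and>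
            (\<forall>x\<in>cube (n - 1). hamming x (take (n - 1) (\<phi> x)) \<le> 1) \<and>
            measure_pmf.prob (pmf_of_set (cube (n - 1))) {x. \<phi> x \<in> A} \<ge> 1 - 40 / real n}
      \<ge> 1 - 2 powr (- (2 powr (1/8 * real n)))"
    by (simp add: good_lift_def)
qed simp

end
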